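(* A category $\mathcal{C}$ is complete w.r.t. systems of equations if at least one of the following holds: (1) for every object $A$, the class of equations with domain $A$ is small up to equivalence (there is a set of equations with domain $A$ such that every equation with domain $A$ is equivalent to one in the set); (2) $\mathcal{C}$ is complete w.r.t. varieties and has equalizers; (3) $\mathcal{C}$ has coproducts and cokernel pairs; (4) $\mathcal{C}$ has cokernel pairs and colimits of all diagrams of shape $P$, where $P$ is any poset having exactly two minimal elements and in which every other element is maximal and greater than both minimal elements.
   Context: An equation is a pair of parallel morphisms; a system of equations is a non-empty set of equations with a common domain $A$; a solution is a morphism $a$ into $A$ with $fa=ga$ for every equation $f\approx g$; $E\Rightarrow K$ means every solution of $E$ is a solution of $K$; two systems (or equations) are equivalent if they have the same solutions. A general solution of $E$ is a solution $v$ through which every solution factors uniquely; a variety is a general solution of some system. For morphisms with common codomain, $f\le v$ means $f=vh$ for some $h$. For a non-empty set $S$ of morphisms with codomain $A$: a system $E$ on $A$ is generated by $S$ if every element of $S$ is a solution of $E$ and every system $K$ on $A$ having all elements of $S$ as solutions satisfies $E\Rightarrow K$; a variety $v$ is generated by $S$ if $f\le v$ for all $f\in S$ and $v\le w$ for every variety $w$ with $f\le w$ for all $f\in S$. $\mathcal{C}$ is complete w.r.t. varieties (resp. systems of equations) if every non-empty set of morphisms with a common codomain generates some variety (resp. some system of equations). *)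

theory Defs
  imports Main
begin

text \<open>A category with object type 'o and morphism type 'm (every element of the types
  is an object / morphism).  cmp C f g is the composite "f after g", meaningful when
  cdom C f = ccod C g.\<close>

record ('o, 'm) cat =
  cdom :: "'m \<Rightarrow> 'o"
  ccod :: "'m \<Rightarrow> 'o"
  cid  :: "'o \<Rightarrow> 'm"
  cmp  :: "'m \<Rightarrow> 'm \<Rightarrow> 'm"

definition category :: "('o, 'm) cat \<Rightarrow> bool" where
  "category C \<longleftrightarrow>
     (\<forall>A. cdom C (cid C A) = A \<and> ccod C (cid C A) = A) \<and>
     (\<forall>f g. cdom C f = ccod C g \<longrightarrow>
        cdom C (cmp C f g) = cdom C g \<and> ccod C (cmp C f g) = ccod C f) \<and>
     (\<forall>f. cmp C f (cid C (cdom C f)) = f \<and> cmp C (cid C (ccod C f)) f = f) \<and>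
     (\<forall>f g h. cdom C f = ccod C g \<and> cdom C g = ccod C h \<longrightarrow>
        cmp C (cmp C f g) h = cmp C f (cmp C g h))"

text \<open>Size: a collection is a "set" (small) if it injects into the universe type 'u.\<close>

definition small :: "'u itself \<Rightarrow> 'a set \<Rightarrow> bool" where
  "small U X \<longleftrightarrow> (\<exists>h :: 'a \<Rightarrow> 'u. inj_on h X)"

definition parallel :: "('o, 'm) cat \<Rightarrow> 'm \<Rightarrow> 'm \<Rightarrow> bool" where
  "parallel C f g \<longleftrightarrow> cdom C f = cdom C g \<and> ccod C f = ccod C g"

definition is_system :: "('o, 'm) cat \<Rightarrow> 'u itself \<Rightarrow> ('m \<times> 'm) set \<Rightarrow> 'o \<Rightarrow> bool" where
  "is_system C U E A \<longleftrightarrow> E \<noteq> {} \<and> small U E \<and>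
     (\<forall>(f, g) \<in> E. parallel C f g \<and> cdom C f = A)"

definition solves :: "('o, 'm) cat \<Rightarrow> 'm \<Rightarrow> 'm \<times> 'm \<Rightarrow> bool" where
  "solves C a e \<longleftrightarrow> ccod C a = cdom C (fst e) \<and> cmp C (fst e) a = cmp C (snd e) a"

definition solution :: "('o, 'm) cat \<Rightarrow> 'm \<Rightarrow> ('m \<times> 'm) set \<Rightarrow> bool" where
  "solution C a E \<longleftrightarrow> (\<forall>e \<in> E. solves C a e)"

definition sys_implies :: "('o, 'm) cat \<Rightarrow> ('m \<times> 'm) set \<Rightarrow> ('m \<times> 'm) set \<Rightarrow> bool" where
  "sys_implies C E K \<longleftrightarrow> (\<forall>a. solution C a E \<longrightarrow> solution C a K)"

definition eq_equiv :: "('o, 'm) cat \<Rightarrow> 'm \<times> 'm \<Rightarrow> 'm \<times> 'm \<Rightarrow> bool" where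
  "eq_equiv C e e' \<longleftrightarrow> (\<forall>a. solves C a e \<longleftrightarrow> solves C a e')"

definition general_solution :: "('o, 'm) cat \<Rightarrow> 'm \<Rightarrow> ('m \<times> 'm) set \<Rightarrow> bool" where
  "general_solution C v E \<longleftrightarrow> solution C v E \<and>
     (\<forall>a. solution C a E \<longrightarrow> (\<exists>!h. ccod C h = cdom C v \<and> a = cmp C v h))"

definition variety :: "('o, 'm) cat \<Rightarrow> 'u itself \<Rightarrow> 'm \<Rightarrow> bool" where
  "variety C U v \<longleftrightarrow> (\<exists>E A. is_system C U E A \<and> general_solution C v E)"

definition factors :: "('o, 'm) cat \<Rightarrow> 'm \<Rightarrow> 'm \<Rightarrow> bool" where
  "factors C f v \<longleftrightarrow> ccod C f = ccod C v \<and> (\<exists>h. ccod C h = cdom C v \<and> f = cmp C v h)"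

definition generates_system ::
    "('o, 'm) cat \<Rightarrow> 'u itself \<Rightarrow> 'm set \<Rightarrow> ('m \<times> 'm) set \<Rightarrow> 'o \<Rightarrow> bool" where
  "generates_system C U S E A \<longleftrightarrow> is_system C U E A \<and> (\<forall>f \<in> S. solution C f E) \<and>
     (\<forall>K. is_system C U K A \<and> (\<forall>f \<in> S. solution C f K) \<longrightarrow> sys_implies C E K)"

definition generates_variety :: "('o, 'm) cat \<Rightarrow> 'u itself \<Rightarrow> 'm set \<Rightarrow> 'm \<Rightarrow> bool" where
  "generates_variety C U S v \<longleftrightarrow> variety C U v \<and> (\<forall>f \<in> S. factors C f v) \<and>
     (\<forall>w. variety C U w \<and> (\<forall>f \<in> S. factors C f w) \<longrightarrow> factors C v w)"

definition complete_wrt_systems :: "('o, 'm) cat \<Rightarrow> 'u itself \<Rightarrow> bool" where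
  "complete_wrt_systems C U \<longleftrightarrow>
     (\<forall>S A. S \<noteq> {} \<and> small U S \<and> (\<forall>f \<in> S. ccod C f = A) \<longrightarrow>
        (\<exists>E. generates_system C U S E A))"

definition complete_wrt_varieties :: "('o, 'm) cat \<Rightarrow> 'u itself \<Rightarrow> bool" where
  "complete_wrt_varieties C U \<longleftrightarrow>
     (\<forall>S A. S \<noteq> {} \<and> small U S \<and> (\<forall>f \<in> S. ccod C f = A) \<longrightarrow>
        (\<exists>v. generates_variety C U S v))"

definition equations_small :: "('o, 'm) cat \<Rightarrow> 'u itself \<Rightarrow> bool" where
  "equations_small C U \<longleftrightarrow>
     (\<forall>A. \<exists>R. small U R \<and> (\<forall>(f, g) \<in> R. parallel C f g \<and> cdom C f = A) \<and>
        (\<forall>f g. parallel C f g \<and> cdom C f = A \<longrightarrow> (\<exists>e \<in> R. eq_equiv C (f, g) e)))"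

definition has_equalizers :: "('o, 'm) cat \<Rightarrow> bool" where
  "has_equalizers C \<longleftrightarrow>
     (\<forall>f g. parallel C f g \<longrightarrow>
        (\<exists>e. ccod C e = cdom C f \<and> cmp C f e = cmp C g e \<and>
           (\<forall>x. ccod C x = cdom C f \<and> cmp C f x = cmp C g x \<longrightarrow>
              (\<exists>!h. ccod C h = cdom C e \<and> x = cmp C e h))))"

definition has_cokernel_pairs :: "('o, 'm) cat \<Rightarrow> bool" where
  "has_cokernel_pairs C \<longleftrightarrow>
     (\<forall>f. \<exists>p q. parallel C p q \<and> cdom C p = ccod C f \<and> cmp C p f = cmp C q f \<and>
        (\<forall>g h. parallel C g h \<and> cdom C g = ccod C f \<and> cmp C g f = cmp C h f \<longrightarrow>
           (\<exists>!t. cdom C t = ccod C p \<and> cmp C t p = g \<and> cmp C t q = h)))"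

definition has_coproducts :: "('o, 'm) cat \<Rightarrow> 'u itself \<Rightarrow> bool" where
  "has_coproducts C (U :: 'u itself) \<longleftrightarrow>
     (\<forall>(I :: 'u set) (X :: 'u \<Rightarrow> 'o). \<exists>Q \<iota>.
        (\<forall>i \<in> I. cdom C (\<iota> i) = X i \<and> ccod C (\<iota> i) = Q) \<and>
        (\<forall>B g. (\<forall>i \<in> I. cdom C (g i) = X i \<and> ccod C (g i) = B) \<longrightarrow>
           (\<exists>!t. cdom C t = Q \<and> ccod C t = B \<and> (\<forall>i \<in> I. cmp C t (\<iota> i) = g i))))"

definition is_poset :: "'u set \<Rightarrow> ('u \<Rightarrow> 'u \<Rightarrow> bool) \<Rightarrow> bool" where
  "is_poset P le \<longleftrightarrow> (\<forall>x \<in> P. le x x) \<and>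
     (\<forall>x \<in> P. \<forall>y \<in> P. le x y \<and> le y x \<longrightarrow> x = y) \<and>
     (\<forall>x \<in> P. \<forall>y \<in> P. \<forall>z \<in> P. le x y \<and> le y z \<longrightarrow> le x z)"

definition minimal_in :: "'u set \<Rightarrow> ('u \<Rightarrow> 'u \<Rightarrow> bool) \<Rightarrow> 'u \<Rightarrow> bool" where
  "minimal_in P le x \<longleftrightarrow> x \<in> P \<and> (\<forall>y \<in> P. le y x \<longrightarrow> y = x)"

definition maximal_in :: "'u set \<Rightarrow> ('u \<Rightarrow> 'u \<Rightarrow> bool) \<Rightarrow> 'u \<Rightarrow> bool" where
  "maximal_in P le x \<longleftrightarrow> x \<in> P \<and> (\<forall>y \<in> P. le x y \<longrightarrow> y = x)"

definition special_shape :: "'u set \<Rightarrow> ('u \<Rightarrow> 'u \<Rightarrow> bool) \<Rightarrow> bool" where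
  "special_shape P le \<longleftrightarrow> is_poset P le \<and>
     (\<exists>m1 m2. m1 \<noteq> m2 \<and> {x. minimal_in P le x} = {m1, m2} \<and>
        (\<forall>x \<in> P - {m1, m2}. maximal_in P le x \<and> le m1 x \<and> le m2 x))"

definition is_diagram ::
    "('o, 'm) cat \<Rightarrow> 'u set \<Rightarrow> ('u \<Rightarrow> 'u \<Rightarrow> bool) \<Rightarrow> ('u \<Rightarrow> 'o) \<Rightarrow> ('u \<Rightarrow> 'u \<Rightarrow> 'm) \<Rightarrow> bool" where
  "is_diagram C P le D Dm \<longleftrightarrow>
     (\<forall>x \<in> P. \<forall>y \<in> P. le x y \<longrightarrow> cdom C (Dm x y) = D x \<and> ccod C (Dm x y) = D y) \<and>
     (\<forall>x \<in> P. Dm x x = cid C (D x)) \<and>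
     (\<forall>x \<in> P. \<forall>y \<in> P. \<forall>z \<in> P. le x y \<and> le y z \<longrightarrow> cmp C (Dm y z) (Dm x y) = Dm x z)"

definition is_cocone ::
    "('o, 'm) cat \<Rightarrow> 'u set \<Rightarrow> ('u \<Rightarrow> 'u \<Rightarrow> bool) \<Rightarrow> ('u \<Rightarrow> 'o) \<Rightarrow> ('u \<Rightarrow> 'u \<Rightarrow> 'm)
       \<Rightarrow> 'o \<Rightarrow> ('u \<Rightarrow> 'm) \<Rightarrow> bool" where
  "is_cocone C P le D Dm B \<mu> \<longleftrightarrow>
     (\<forall>x \<in> P. cdom C (\<mu> x) = D x \<and> ccod C (\<mu> x) = B) \<and>
     (\<forall>x \<in> P. \<forall>y \<in> P. le x y \<longrightarrow> cmp C (\<mu> y) (Dm x y) = \<mu> x)"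

definition has_colimit ::
    "('o, 'm) cat \<Rightarrow> 'u set \<Rightarrow> ('u \<Rightarrow> 'u \<Rightarrow> bool) \<Rightarrow> ('u \<Rightarrow> 'o) \<Rightarrow> ('u \<Rightarrow> 'u \<Rightarrow> 'm) \<Rightarrow> bool" where
  "has_colimit C P le D Dm \<longleftrightarrow>
     (\<exists>L lg. is_cocone C P le D Dm L lg \<and>
        (\<forall>B \<mu>. is_cocone C P le D Dm B \<mu> \<longrightarrow>
           (\<exists>!t. cdom C t = L \<and> ccod C t = B \<and> (\<forall>x \<in> P. cmp C t (lg x) = \<mu> x))))"

definition has_special_colimits :: "('o, 'm) cat \<Rightarrow> 'u itself \<Rightarrow> bool" where
  "has_special_colimits C (U :: 'u itself) \<longleftrightarrow>
     (\<forall>(P :: 'u set) le D Dm. special_shape P le \<and> is_diagram C P le D Dm \<longrightarrow>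
        has_colimit C P le D Dm)"

end

theory Submission
  imports Defs
begin

text \<open>In every case we exhibit a system E on A whose solutions are exactly the morphisms
  solving all equations on A that S solves. Under (1), E is the set of representatives solved
  by S. Under (2), E is any system presenting the variety v generated by S: an equation solved
  by S has an equalizer, a variety through which S and hence v factors, so v solves it. Under
  (3) and (4) it suffices to find one equation (p, q) solved by S through which every other
  such equation factors by postcomposition: the cokernel pair of the morphism out of the
  coproduct of the domains of S, respectively the colimit gluing the cokernel pairs of the
  members of S along two copies of A.\<close>

lemma infinite_inj_avoiding_two:
  assumes "infinite (UNIV :: 'u set)"
  obtains k :: "'u \<Rightarrow> 'u" and m1 m2 where "inj k" "m1 \<noteq> m2" "m1 \<notin> range k" "m2 \<notin> range k"
proof -
  fix a :: 'u
  obtain h where "bij_betw h (UNIV :: 'u set) (UNIV - {a})"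
    using infinite_imp_bij_betw[of "UNIV :: 'u set" a] assms by auto
  then have h: "inj h" "range h = UNIV - {a}" unfolding bij_betw_def by auto
  then have "h a \<notin> range (h \<circ> h)" by (auto simp: inj_eq)
  with h show ?thesis by (intro that[of "h \<circ> h" a "h a"]) (auto simp: inj_compose)
qed

lemma has_coproducts_reindex:
  fixes U :: "'u itself" and K :: "'a set" and X :: "'a \<Rightarrow> 'o"
  assumes coprods: "has_coproducts C U" and "small U K"
  obtains Q \<iota> where "\<forall>k \<in> K. cdom C (\<iota> k) = X k \<and> ccod C (\<iota> k) = Q"
    "\<forall>B g. (\<forall>k \<in> K. cdom C (g k) = X k \<and> ccod C (g k) = B) \<longrightarrow>
       (\<exists>!t. cdom C t = Q \<and> ccod C t = B \<and> (\<forall>k \<in> K. cmp C t (\<iota> k) = g k))"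
proof -
  obtain idx :: "'a \<Rightarrow> 'u" where idx: "inj_on idx K" using assms(2) unfolding small_def by blast
  define idx_inv where "idx_inv = inv_into K idx"
  have idx_inv_idx [simp]: "idx_inv (idx k) = k" if "k \<in> K" for k
    using idx that unfolding idx_inv_def by simp
  obtain Q \<iota> where \<iota>: "\<forall>i \<in> idx ` K. cdom C (\<iota> i) = X (idx_inv i) \<and> ccod C (\<iota> i) = Q"
    and coprod: "\<forall>B g. (\<forall>i \<in> idx ` K. cdom C (g i) = X (idx_inv i) \<and> ccod C (g i) = B) \<longrightarrow>
           (\<exists>!t. cdom C t = Q \<and> ccod C t = B \<and> (\<forall>i \<in> idx ` K. cmp C t (\<iota> i) = g i))"
    using coprods[unfolded has_coproducts_def, THEN spec[of _ "idx ` K"],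
        THEN spec[of _ "\<lambda>i. X (idx_inv i)"]] by (elim exE conjE)
  show ?thesis
  proof (rule that[of "\<iota> \<circ> idx"])
    show "\<forall>k \<in> K. cdom C ((\<iota> \<circ> idx) k) = X k \<and> ccod C ((\<iota> \<circ> idx) k) = Q" using \<iota> by simp
    show "\<forall>B g. (\<forall>k \<in> K. cdom C (g k) = X k \<and> ccod C (g k) = B) \<longrightarrow>
       (\<exists>!t. cdom C t = Q \<and> ccod C t = B \<and> (\<forall>k \<in> K. cmp C t ((\<iota> \<circ> idx) k) = g k))"
    proof (intro allI impI)
      fix B g assume "\<forall>k \<in> K. cdom C (g k) = X k \<and> ccod C (g k) = B"
      then have "\<forall>i \<in> idx ` K. cdom C (g (idx_inv i)) = X (idx_inv i) \<and> ccod C (g (idx_inv i)) = B"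
        by simp
      then have "\<exists>!t. cdom C t = Q \<and> ccod C t = B \<and> (\<forall>i \<in> idx ` K. cmp C t (\<iota> i) = g (idx_inv i))"
        using coprod[rule_format, of "\<lambda>i. g (idx_inv i)" B] by blast
      moreover have "(\<forall>i \<in> idx ` K. cmp C t (\<iota> i) = g (idx_inv i)) \<longleftrightarrow>
          (\<forall>k \<in> K. cmp C t ((\<iota> \<circ> idx) k) = g k)" for t
        by simp
      ultimately show "\<exists>!t. cdom C t = Q \<and> ccod C t = B \<and> (\<forall>k \<in> K. cmp C t ((\<iota> \<circ> idx) k) = g k)"
        by simp
    qed
  qed
qed

definition two_bottoms_le :: "'u \<Rightarrow> 'u \<Rightarrow> 'u \<Rightarrow> 'u \<Rightarrow> bool" where
  "two_bottoms_le m1 m2 x y \<longleftrightarrow> x = y \<or> (x \<in> {m1, m2} \<and> y \<notin> {m1, m2})"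

lemma special_shape_two_bottoms:
  assumes "m1 \<noteq> m2" "m1 \<notin> J" "m2 \<notin> J"
  shows "special_shape ({m1, m2} \<union> J) (two_bottoms_le m1 m2)"
  unfolding special_shape_def
proof (intro conjI exI)
  show "is_poset ({m1, m2} \<union> J) (two_bottoms_le m1 m2)"
    unfolding is_poset_def two_bottoms_le_def by auto
  show "{x. minimal_in ({m1, m2} \<union> J) (two_bottoms_le m1 m2) x} = {m1, m2}"
    using assms unfolding minimal_in_def two_bottoms_le_def by auto
  show "\<forall>x \<in> {m1, m2} \<union> J - {m1, m2}. maximal_in ({m1, m2} \<union> J) (two_bottoms_le m1 m2) x \<and>
      two_bottoms_le m1 m2 m1 x \<and> two_bottoms_le m1 m2 m2 x"
    unfolding maximal_in_def two_bottoms_le_def by auto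
qed (fact assms)

context
  fixes C :: "('o, 'm) cat"
  assumes category: "category C"
begin

lemma cdom_cmp [simp]: "cdom C f = ccod C g \<Longrightarrow> cdom C (cmp C f g) = cdom C g"
  using category unfolding category_def by blast

lemma ccod_cmp [simp]: "cdom C f = ccod C g \<Longrightarrow> ccod C (cmp C f g) = ccod C f"
  using category unfolding category_def by blast

lemma cmp_assoc:
  "cdom C f = ccod C g \<Longrightarrow> cdom C g = ccod C h \<Longrightarrow> cmp C (cmp C f g) h = cmp C f (cmp C g h)"
  using category unfolding category_def by blast

lemma cmp_cid_right [simp]: "cdom C f = X \<Longrightarrow> cmp C f (cid C X) = f"
  using category unfolding category_def by blast

lemma cmp_cid_left [simp]: "ccod C f = X \<Longrightarrow> cmp C (cid C X) f = f"
  using category unfolding category_def by blast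

lemma cdom_cid [simp]: "cdom C (cid C X) = X"
  using category unfolding category_def by blast

lemma ccod_cid [simp]: "ccod C (cid C X) = X"
  using category unfolding category_def by blast

lemma cmp_eq_precompose:
  assumes "cmp C g f = cmp C h f" "parallel C g h" "cdom C g = ccod C f" "cdom C f = ccod C x"
  shows "cmp C g (cmp C f x) = cmp C h (cmp C f x)"
  using assms cmp_assoc[of g f x] cmp_assoc[of h f x] unfolding parallel_def by simp

lemma solves_precompose:
  assumes "solves C v e" "parallel C (fst e) (snd e)" "ccod C h = cdom C v"
  shows "solves C (cmp C v h) e"
  using assms cmp_eq_precompose[of "fst e" v "snd e" h] by (simp add: solves_def parallel_def)

lemma solution_precompose:
  assumes "solution C v E" "\<forall>(f, g) \<in> E. parallel C f g" "ccod C h = cdom C v"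
  shows "solution C (cmp C v h) E"
  using assms solves_precompose unfolding solution_def by fastforce

lemma general_solution_sys_implies:
  assumes "general_solution C v E" "solution C v K" "\<forall>(f, g) \<in> K. parallel C f g"
  shows "sys_implies C E K"
  using assms solution_precompose unfolding general_solution_def sys_implies_def by metis

lemma is_system_memD: "is_system C U E A \<Longrightarrow> (f, g) \<in> E \<Longrightarrow> cdom C f = A"
  unfolding is_system_def by auto

lemma solves_pair: "solves C a (g, h) \<longleftrightarrow> ccod C a = cdom C g \<and> cmp C g a = cmp C h a"
  by (simp add: solves_def)

lemma solves_postcompose:
  assumes "solves C f (p, q)" "parallel C p q" "cdom C t = ccod C p"
  shows "solves C f (cmp C t p, cmp C t q)"
  using assms cmp_assoc[of t p f] cmp_assoc[of t q f] by (simp add: solves_def parallel_def)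

section \<open>Universal equations\<close>

definition universal_equation :: "'m set \<Rightarrow> 'o \<Rightarrow> 'm \<Rightarrow> 'm \<Rightarrow> bool" where
  "universal_equation S A p q \<longleftrightarrow> parallel C p q \<and> cdom C p = A \<and>
     (\<forall>f \<in> S. solves C f (p, q)) \<and>
     (\<forall>g h. parallel C g h \<and> cdom C g = A \<and> (\<forall>f \<in> S. solves C f (g, h)) \<longrightarrow>
        (\<exists>t. cdom C t = ccod C p \<and> cmp C t p = g \<and> cmp C t q = h))"

lemma universal_equation_generates_system:
  assumes univ: "universal_equation S A p q"
  shows "generates_system C U S {(p, q)} A"
  unfolding generates_system_def
proof (intro conjI allI impI)
  show "is_system C U {(p, q)} A"
    using univ by (auto simp: is_system_def small_def universal_equation_def)
  show "\<forall>f \<in> S. solution C f {(p, q)}"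
    using univ by (auto simp: solution_def universal_equation_def)
next
  fix K assume K: "is_system C U K A \<and> (\<forall>f \<in> S. solution C f K)"
  show "sys_implies C {(p, q)} K" unfolding sys_implies_def solution_def
  proof (intro allI impI ballI)
    fix a e assume a: "\<forall>e \<in> {(p, q)}. solves C a e" and e: "e \<in> K"
    obtain g h where e_def: "e = (g, h)" by (cases e)
    have "parallel C g h" "cdom C g = A" using K e e_def by (auto simp: is_system_def)
    moreover have "\<forall>f \<in> S. solves C f (g, h)" using K e e_def unfolding solution_def by blast
    ultimately obtain t where "cdom C t = ccod C p" "g = cmp C t p" "h = cmp C t q"
      using univ unfolding universal_equation_def by metis
    with a univ show "solves C a e"
      using solves_postcompose[of a p q t] e_def unfolding universal_equation_def by simp
  qed
qed

lemma universal_equation_cong: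
  assumes univ: "universal_equation T A p q"
    and same: "\<And>g h. parallel C g h \<Longrightarrow> cdom C g = A \<Longrightarrow>
           (\<forall>f \<in> T. solves C f (g, h)) \<longleftrightarrow> (\<forall>f \<in> S. solves C f (g, h))"
  shows "universal_equation S A p q"
proof -
  have "parallel C p q" "cdom C p = A" "\<forall>f \<in> T. solves C f (p, q)"
    using univ unfolding universal_equation_def by auto
  then have "\<forall>f \<in> S. solves C f (p, q)" using same by blast
  with univ same show ?thesis unfolding universal_equation_def by blast
qed

lemma universal_equation_cokernel_pair:
  assumes "has_cokernel_pairs C"
  shows "\<exists>p q. universal_equation {f} (ccod C f) p q"
proof -
  obtain p q where pq: "parallel C p q" "cdom C p = ccod C f" "cmp C p f = cmp C q f"
    and univ: "\<forall>g h. parallel C g h \<and> cdom C g = ccod C f \<and> cmp C g f = cmp C h f \<longrightarrow>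
       (\<exists>!t. cdom C t = ccod C p \<and> cmp C t p = g \<and> cmp C t q = h)"
    using assms unfolding has_cokernel_pairs_def by blast
  have "universal_equation {f} (ccod C f) p q"
    unfolding universal_equation_def solves_pair
  proof (intro conjI allI impI)
    fix g h assume "parallel C g h \<and> cdom C g = ccod C f \<and>
      (\<forall>f' \<in> {f}. ccod C f' = cdom C g \<and> cmp C g f' = cmp C h f')"
    then show "\<exists>t. cdom C t = ccod C p \<and> cmp C t p = g \<and> cmp C t q = h" using univ by blast
  qed (use pq in simp_all)
  then show ?thesis by blast
qed

section \<open>Equations small up to equivalence\<close>

lemma equations_small_generates_system:
  assumes small_eqs: "equations_small C U" and cod: "\<forall>f \<in> S. ccod C f = A"
  shows "\<exists>E. generates_system C U S E A"
proof -
  obtain R where R_small: "small U R" and R_eqs: "\<forall>(f, g) \<in> R. parallel C f g \<and> cdom C f = A"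
    and R_repr: "\<And>f g. parallel C f g \<Longrightarrow> cdom C f = A \<Longrightarrow> \<exists>e \<in> R. eq_equiv C (f, g) e"
    using small_eqs unfolding equations_small_def by meson
  define E where "E = {e \<in> R. \<forall>f \<in> S. solves C f e}"
  obtain e0 where "e0 \<in> R" "eq_equiv C (cid C A, cid C A) e0"
    using R_repr[of "cid C A" "cid C A"] by (auto simp: parallel_def)
  then have "e0 \<in> E" using cod unfolding E_def eq_equiv_def solves_def by auto
  have "E \<subseteq> R" unfolding E_def by blast
  then have "small U E" using R_small unfolding small_def by (meson inj_on_subset)
  moreover have "\<forall>(f, g) \<in> E. parallel C f g \<and> cdom C f = A" using R_eqs \<open>E \<subseteq> R\<close> by fast
  ultimately have "is_system C U E A" using \<open>e0 \<in> E\<close> unfolding is_system_def by blast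
  moreover have "\<forall>f \<in> S. solution C f E" unfolding E_def solution_def by blast
  moreover have "sys_implies C E K" if K: "is_system C U K A" "\<forall>f \<in> S. solution C f K" for K
    unfolding sys_implies_def solution_def
  proof (intro allI impI ballI)
    fix a e assume a: "\<forall>e \<in> E. solves C a e" and "e \<in> K"
    then obtain e' where e': "e' \<in> R" "eq_equiv C e e'"
      using K(1) R_repr unfolding is_system_def by fastforce
    then have "e' \<in> E" using K(2) \<open>e \<in> K\<close> unfolding E_def solution_def eq_equiv_def by blast
    then show "solves C a e" using a e' unfolding eq_equiv_def by blast
  qed
  ultimately show ?thesis unfolding generates_system_def by blast
qed

section \<open>Generated varieties and equalizers\<close>

lemma equalizer_is_variety:
  assumes "has_equalizers C" "parallel C g h"
  shows "\<exists>e. variety C U e \<and> general_solution C e {(g, h)}"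
proof -
  obtain e where "ccod C e = cdom C g" "cmp C g e = cmp C h e"
    "\<And>x. ccod C x = cdom C g \<Longrightarrow> cmp C g x = cmp C h x \<Longrightarrow>
       \<exists>!y. ccod C y = cdom C e \<and> x = cmp C e y"
    using assms unfolding has_equalizers_def by metis
  then have "general_solution C e {(g, h)}"
    unfolding general_solution_def solution_def solves_def by auto
  moreover have "is_system C U {(g, h)} (cdom C g)"
    using assms(2) by (auto simp: is_system_def small_def)
  ultimately show ?thesis unfolding variety_def by blast
qed

lemma generated_variety_solves:
  assumes gen: "generates_variety C U S v" and eqs: "has_equalizers C"
    and gh: "parallel C g h" and sol: "\<forall>f \<in> S. solves C f (g, h)"
  shows "solves C v (g, h)"
proof -
  obtain e where e_var: "variety C U e" and e_gen: "general_solution C e {(g, h)}"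
    using equalizer_is_variety[OF eqs gh] by blast
  have "factors C f e" if "f \<in> S" for f
  proof -
    have "solution C f {(g, h)}" using sol that unfolding solution_def by blast
    then obtain y where "ccod C y = cdom C e" "f = cmp C e y"
      using e_gen unfolding general_solution_def by blast
    moreover have "ccod C f = ccod C e"
      using sol that e_gen unfolding general_solution_def solution_def solves_def by simp
    ultimately show ?thesis unfolding factors_def by blast
  qed
  then have "factors C v e" using gen e_var unfolding generates_variety_def by blast
  then obtain y where "ccod C y = cdom C e" "v = cmp C e y" unfolding factors_def by blast
  then show ?thesis
    using solves_precompose[of e "(g, h)" y] e_gen gh unfolding general_solution_def solution_def by auto
qed

lemma generated_variety_generates_system:
  assumes gen: "generates_variety C U S v" and eqs: "has_equalizers C"
    and S: "S \<noteq> {}" "\<forall>f \<in> S. ccod C f = A"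
  shows "\<exists>E. generates_system C U S E A"
proof -
  have "variety C U v" using gen unfolding generates_variety_def by (rule conjunct1)
  have v_factors: "\<forall>f \<in> S. factors C f v"
    using gen unfolding generates_variety_def by (rule conjunct1[OF conjunct2])
  obtain E A' where E: "is_system C U E A'" "general_solution C v E"
    using \<open>variety C U v\<close> unfolding variety_def by blast
  have "A' = A"
  proof -
    obtain f where "f \<in> S" using S by blast
    then have "ccod C v = A" using S(2) v_factors unfolding factors_def by metis
    obtain e where "e \<in> E" using E(1) unfolding is_system_def by blast
    moreover obtain g h where "e = (g, h)" by (cases e)
    ultimately have "(g, h) \<in> E" by simp
    then have "solves C v (g, h)" using E(2) unfolding general_solution_def solution_def by blast
    moreover have "cdom C g = A'" using E(1) \<open>(g, h) \<in> E\<close> by (rule is_system_memD)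
    ultimately show ?thesis using \<open>ccod C v = A\<close> unfolding solves_pair by metis
  qed
  have E_par: "\<forall>(f, g) \<in> E. parallel C f g" using E(1) unfolding is_system_def by auto
  have "solution C f E" if "f \<in> S" for f
  proof -
    from v_factors that have "factors C f v" by blast
    then obtain y where "ccod C y = cdom C v" "f = cmp C v y" unfolding factors_def by blast
    then show ?thesis using solution_precompose[OF _ E_par] E(2) unfolding general_solution_def by simp
  qed
  moreover have "sys_implies C E K" if K: "is_system C U K A" "\<forall>f \<in> S. solution C f K" for K
  proof (rule general_solution_sys_implies[OF E(2)])
    show K_par: "\<forall>(f, g) \<in> K. parallel C f g" using K(1) unfolding is_system_def by auto
    show "solution C v K" unfolding solution_def
    proof
      fix e assume "e \<in> K"
      moreover obtain g h where e_def: "e = (g, h)" by (cases e)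
      ultimately have "parallel C g h" "\<forall>f \<in> S. solves C f (g, h)"
        using K(2) K_par unfolding solution_def by blast+
      then show "solves C v e" using generated_variety_solves[OF gen eqs] e_def by blast
    qed
  qed
  ultimately have "generates_system C U S E A"
    using E(1) \<open>A' = A\<close> unfolding generates_system_def by blast
  then show ?thesis ..
qed

section \<open>Coproducts and cokernel pairs\<close>

lemma coproduct_tuple_same_equations:
  fixes U :: "'u itself"
  assumes coprods: "has_coproducts C U" and "small U S" and cod: "\<forall>f \<in> S. ccod C f = A"
  obtains t where "ccod C t = A"
    "\<And>g h. parallel C g h \<Longrightarrow> cdom C g = A \<Longrightarrow>
       cmp C g t = cmp C h t \<longleftrightarrow> (\<forall>f \<in> S. cmp C g f = cmp C h f)"
proof -
  obtain Q \<iota> where \<iota>: "\<forall>f \<in> S. cdom C (\<iota> f) = cdom C f \<and> ccod C (\<iota> f) = Q"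
    and coprod: "\<forall>B g. (\<forall>f \<in> S. cdom C (g f) = cdom C f \<and> ccod C (g f) = B) \<longrightarrow>
       (\<exists>!t. cdom C t = Q \<and> ccod C t = B \<and> (\<forall>f \<in> S. cmp C t (\<iota> f) = g f))"
    by (rule has_coproducts_reindex[OF coprods assms(2)])
  obtain t where t: "cdom C t = Q" "ccod C t = A" "\<forall>f \<in> S. cmp C t (\<iota> f) = f"
    using coprod[rule_format, of "\<lambda>f. f" A] cod by blast
  show ?thesis
  proof (rule that[OF t(2)])
    fix g h assume gh: "parallel C g h" "cdom C g = A"
    show "cmp C g t = cmp C h t \<longleftrightarrow> (\<forall>f \<in> S. cmp C g f = cmp C h f)"
    proof
      assume "cmp C g t = cmp C h t"
      then show "\<forall>f \<in> S. cmp C g f = cmp C h f"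
        using t \<iota> gh cmp_eq_precompose[of g t h] by metis
    next
      assume eq: "\<forall>f \<in> S. cmp C g f = cmp C h f"
      have h: "cdom C h = A" "ccod C h = ccod C g" using gh unfolding parallel_def by auto
      have legs: "\<forall>f \<in> S. cdom C (cmp C g f) = cdom C f \<and> ccod C (cmp C g f) = ccod C g"
        using gh cod by simp
      have "\<forall>f \<in> S. cmp C (cmp C g t) (\<iota> f) = cmp C g f"
        using gh t \<iota> by (simp add: cmp_assoc)
      moreover have "\<forall>f \<in> S. cmp C (cmp C h t) (\<iota> f) = cmp C g f"
        using h t \<iota> eq by (simp add: cmp_assoc)
      moreover have "cdom C (cmp C g t) = Q" "ccod C (cmp C g t) = ccod C g"
        "cdom C (cmp C h t) = Q" "ccod C (cmp C h t) = ccod C g"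
        using gh h t by simp_all
      ultimately show "cmp C g t = cmp C h t"
        using coprod[rule_format, of "\<lambda>f. cmp C g f" "ccod C g"] legs by blast
    qed
  qed
qed

lemma universal_equation_coproducts:
  fixes U :: "'u itself"
  assumes "has_coproducts C U" "has_cokernel_pairs C" "small U S" "\<forall>f \<in> S. ccod C f = A"
  shows "\<exists>p q. universal_equation S A p q"
proof -
  obtain t where t: "ccod C t = A"
    "\<And>g h. parallel C g h \<Longrightarrow> cdom C g = A \<Longrightarrow>
       cmp C g t = cmp C h t \<longleftrightarrow> (\<forall>f \<in> S. cmp C g f = cmp C h f)"
    using coproduct_tuple_same_equations[OF assms(1,3,4)] by blast
  obtain p q where "universal_equation {t} A p q"
    using universal_equation_cokernel_pair[OF assms(2), of t] t(1) by blast
  then have "universal_equation S A p q"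
  proof (rule universal_equation_cong)
    fix g h assume gh: "parallel C g h" "cdom C g = A"
    have "(\<forall>f \<in> {t}. solves C f (g, h)) \<longleftrightarrow> cmp C g t = cmp C h t"
      using t(1) gh(2) by (simp add: solves_pair)
    also have "\<dots> \<longleftrightarrow> (\<forall>f \<in> S. cmp C g f = cmp C h f)" using gh by (rule t(2))
    also have "\<dots> \<longleftrightarrow> (\<forall>f \<in> S. solves C f (g, h))"
      using assms(4) gh(2) by (simp add: solves_pair)
    finally show "(\<forall>f \<in> {t}. solves C f (g, h)) \<longleftrightarrow> (\<forall>f \<in> S. solves C f (g, h))" .
  qed
  then show ?thesis by blast
qed

section \<open>Cokernel pairs and colimits of two-bottom shapes\<close>

definition pairs_obj :: "'u \<Rightarrow> 'u \<Rightarrow> 'o \<Rightarrow> ('u \<Rightarrow> 'm) \<Rightarrow> 'u \<Rightarrow> 'o" where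
  "pairs_obj m1 m2 A p x = (if x \<in> {m1, m2} then A else ccod C (p x))"

definition pairs_mor :: "'u \<Rightarrow> 'u \<Rightarrow> 'o \<Rightarrow> ('u \<Rightarrow> 'm) \<Rightarrow> ('u \<Rightarrow> 'm) \<Rightarrow> 'u \<Rightarrow> 'u \<Rightarrow> 'm" where
  "pairs_mor m1 m2 A p q x y =
     (if x = y then cid C (pairs_obj m1 m2 A p x) else if x = m1 then p y else q y)"

lemma is_diagram_pairs:
  assumes fresh: "m1 \<noteq> m2" "m1 \<notin> J" "m2 \<notin> J"
    and pq: "\<And>j. j \<in> J \<Longrightarrow> parallel C (p j) (q j) \<and> cdom C (p j) = A"
  shows "is_diagram C ({m1, m2} \<union> J) (two_bottoms_le m1 m2) (pairs_obj m1 m2 A p) (pairs_mor m1 m2 A p q)"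
proof -
  let ?D = "pairs_obj m1 m2 A p" and ?Dm = "pairs_mor m1 m2 A p q"
  have mor: "cdom C (?Dm x y) = ?D x \<and> ccod C (?Dm x y) = ?D y"
    if "y \<in> {m1, m2} \<union> J" "two_bottoms_le m1 m2 x y" for x y
    using that fresh pq[of y]
    by (auto simp: pairs_mor_def pairs_obj_def two_bottoms_le_def parallel_def)
  have comp: "cmp C (?Dm y z) (?Dm x y) = ?Dm x z"
    if "y \<in> {m1, m2} \<union> J" "z \<in> {m1, m2} \<union> J" "two_bottoms_le m1 m2 x y" "two_bottoms_le m1 m2 y z"
    for x y z
  proof (cases "x = y")
    case True
    then show ?thesis using mor[of z y] that by (simp add: pairs_mor_def)
  next
    case False
    then have "y = z" using that by (auto simp: two_bottoms_le_def)
    then show ?thesis using mor[of y x] that by (simp add: pairs_mor_def)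
  qed
  show ?thesis unfolding is_diagram_def using mor comp by (simp add: pairs_mor_def)
qed

lemma is_cocone_pairs:
  assumes fresh: "m1 \<noteq> m2" "m1 \<notin> J" "m2 \<notin> J" and gh: "parallel C g h" "cdom C g = A"
    and u: "\<And>j. j \<in> J \<Longrightarrow> cdom C (u j) = ccod C (p j) \<and> cmp C (u j) (p j) = g \<and> cmp C (u j) (q j) = h"
  shows "is_cocone C ({m1, m2} \<union> J) (two_bottoms_le m1 m2) (pairs_obj m1 m2 A p) (pairs_mor m1 m2 A p q)
           (ccod C g) (\<lambda>x. if x = m1 then g else if x = m2 then h else u x)"
proof -
  let ?\<mu> = "\<lambda>x. if x = m1 then g else if x = m2 then h else u x"
  have legs: "cdom C (?\<mu> x) = pairs_obj m1 m2 A p x \<and> ccod C (?\<mu> x) = ccod C g"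
    if "x \<in> {m1, m2} \<union> J" for x
  proof (cases "x \<in> J")
    case True
    then have "ccod C (u x) = ccod C g" using u ccod_cmp by metis
    with True u fresh show ?thesis by (auto simp: pairs_obj_def)
  qed (use that gh in \<open>auto simp: pairs_obj_def parallel_def\<close>)
  show ?thesis unfolding is_cocone_def
  proof (intro conjI ballI impI)
    fix x y assume "x \<in> {m1, m2} \<union> J" "y \<in> {m1, m2} \<union> J" "two_bottoms_le m1 m2 x y"
    then show "cmp C (?\<mu> y) (pairs_mor m1 m2 A p q x y) = ?\<mu> x"
      using legs[of x] u[of y] fresh by (auto simp: pairs_mor_def two_bottoms_le_def)
  qed (use legs in auto)
qed

lemma is_cocone_pairsD:
  assumes cocone: "is_cocone C ({m1, m2} \<union> J) (two_bottoms_le m1 m2) (pairs_obj m1 m2 A p)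
      (pairs_mor m1 m2 A p q) L lg"
    and fresh: "m1 \<noteq> m2" "m1 \<notin> J" "m2 \<notin> J"
  shows "cdom C (lg m1) = A" "cdom C (lg m2) = A" "ccod C (lg m1) = L" "ccod C (lg m2) = L"
    and "j \<in> J \<Longrightarrow>
      cdom C (lg j) = ccod C (p j) \<and> cmp C (lg j) (p j) = lg m1 \<and> cmp C (lg j) (q j) = lg m2"
proof -
  show "cdom C (lg m1) = A" "cdom C (lg m2) = A" "ccod C (lg m1) = L" "ccod C (lg m2) = L"
    using cocone unfolding is_cocone_def pairs_obj_def by auto
  assume j: "j \<in> J"
  then have "two_bottoms_le m1 m2 m1 j" "two_bottoms_le m1 m2 m2 j"
    using fresh unfolding two_bottoms_le_def by auto
  with j have "cdom C (lg j) = pairs_obj m1 m2 A p j" "cmp C (lg j) (pairs_mor m1 m2 A p q m1 j) = lg m1"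
    "cmp C (lg j) (pairs_mor m1 m2 A p q m2 j) = lg m2"
    using cocone unfolding is_cocone_def by blast+
  with j fresh show
    "cdom C (lg j) = ccod C (p j) \<and> cmp C (lg j) (p j) = lg m1 \<and> cmp C (lg j) (q j) = lg m2"
    unfolding pairs_obj_def pairs_mor_def by auto
qed

lemma universal_equation_UN:
  fixes U :: "'u itself" and J :: "'u set"
  assumes colims: "has_special_colimits C U" and fresh: "m1 \<noteq> m2" "m1 \<notin> J" "m2 \<notin> J"
    and univ: "\<And>j. j \<in> J \<Longrightarrow> universal_equation (S j) A (p j) (q j)"
  shows "\<exists>p' q'. universal_equation (\<Union>j \<in> J. S j) A p' q'"
proof -
  define P where "P = {m1, m2} \<union> J"
  define le where "le = two_bottoms_le m1 m2"
  define D where "D = pairs_obj m1 m2 A p"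
  define Dm where "Dm = pairs_mor m1 m2 A p q"
  have pq: "\<And>j. j \<in> J \<Longrightarrow> parallel C (p j) (q j) \<and> cdom C (p j) = A"
    using univ unfolding universal_equation_def by blast
  have "is_diagram C P le D Dm"
    unfolding P_def le_def D_def Dm_def by (rule is_diagram_pairs[OF fresh]) (rule pq)
  then have "has_colimit C P le D Dm"
    using colims special_shape_two_bottoms[OF fresh]
    unfolding has_special_colimits_def P_def le_def by blast
  then obtain L lg where cocone: "is_cocone C P le D Dm L lg"
    and colim: "\<And>B \<mu>. is_cocone C P le D Dm B \<mu> \<Longrightarrow>
                  \<exists>t. cdom C t = L \<and> (\<forall>x \<in> P. cmp C t (lg x) = \<mu> x)"
    unfolding has_colimit_def by metis
  have bottoms: "cdom C (lg m1) = A" "cdom C (lg m2) = A" "ccod C (lg m1) = L" "ccod C (lg m2) = L"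
    and tops: "\<And>j. j \<in> J \<Longrightarrow>
      cdom C (lg j) = ccod C (p j) \<and> cmp C (lg j) (p j) = lg m1 \<and> cmp C (lg j) (q j) = lg m2"
    using is_cocone_pairsD[OF cocone[unfolded P_def le_def D_def Dm_def] fresh] by blast+
  show ?thesis unfolding universal_equation_def
  proof (rule exI[of _ "lg m1"], rule exI[of _ "lg m2"], intro conjI allI impI)
    show "parallel C (lg m1) (lg m2)" using bottoms by (simp add: parallel_def)
    show "cdom C (lg m1) = A" by (fact bottoms)
    show "\<forall>f \<in> (\<Union>j \<in> J. S j). solves C f (lg m1, lg m2)"
      using univ tops solves_postcompose unfolding universal_equation_def by fastforce
  next
    fix g h assume "parallel C g h \<and> cdom C g = A \<and> (\<forall>f \<in> (\<Union>j \<in> J. S j). solves C f (g, h))"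
    then have gh: "parallel C g h" "cdom C g = A" "\<forall>j \<in> J. \<forall>f \<in> S j. solves C f (g, h)" by auto
    have "\<forall>j \<in> J. \<exists>t. cdom C t = ccod C (p j) \<and> cmp C t (p j) = g \<and> cmp C t (q j) = h"
      using univ gh unfolding universal_equation_def by blast
    then obtain u where u: "\<And>j. j \<in> J \<Longrightarrow>
        cdom C (u j) = ccod C (p j) \<and> cmp C (u j) (p j) = g \<and> cmp C (u j) (q j) = h"
      by metis
    have "is_cocone C P le D Dm (ccod C g) (\<lambda>x. if x = m1 then g else if x = m2 then h else u x)"
      unfolding P_def le_def D_def Dm_def by (rule is_cocone_pairs[OF fresh gh(1,2)]) (rule u)
    then obtain t where "cdom C t = L"
      "\<forall>x \<in> P. cmp C t (lg x) = (if x = m1 then g else if x = m2 then h else u x)"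
      using colim by blast
    then show "\<exists>t. cdom C t = ccod C (lg m1) \<and> cmp C t (lg m1) = g \<and> cmp C t (lg m2) = h"
      using bottoms fresh unfolding P_def by auto
  qed
qed

lemma universal_equation_special_colimits:
  fixes U :: "'u itself"
  assumes cokernels: "has_cokernel_pairs C" and colims: "has_special_colimits C U"
    and inf: "infinite (UNIV :: 'u set)" and "small U S" and cod: "\<forall>f \<in> S. ccod C f = A"
  shows "\<exists>p q. universal_equation S A p q"
proof -
  obtain idx :: "'m \<Rightarrow> 'u" where idx: "inj_on idx S" using assms(4) unfolding small_def by blast
  obtain k :: "'u \<Rightarrow> 'u" and m1 m2 where k: "inj k" "m1 \<noteq> m2" "m1 \<notin> range k" "m2 \<notin> range k"
    using infinite_inj_avoiding_two[OF inf] by metis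
  define J where "J = (k \<circ> idx) ` S"
  define f_at where "f_at j = inv_into S (k \<circ> idx) j" for j
  have inj: "inj_on (k \<circ> idx) S" using idx k(1) by (simp add: comp_inj_on inj_on_subset)
  have "\<forall>j \<in> J. \<exists>p q. universal_equation {f_at j} A p q"
  proof
    fix j assume "j \<in> J"
    then have "ccod C (f_at j) = A" using cod unfolding J_def f_at_def by (simp add: inv_into_into)
    then show "\<exists>p q. universal_equation {f_at j} A p q"
      using universal_equation_cokernel_pair[OF cokernels, of "f_at j"] by simp
  qed
  then obtain p q where "\<And>j. j \<in> J \<Longrightarrow> universal_equation {f_at j} A (p j) (q j)"
    by metis
  moreover have "m1 \<notin> J" "m2 \<notin> J" using k unfolding J_def by auto
  moreover have "(\<Union>j \<in> J. {f_at j}) = S"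
    using inv_into_image_cancel[OF inj, of S] unfolding J_def f_at_def by auto
  ultimately show ?thesis using universal_equation_UN[OF colims k(2)] by metis
qed

end

theorem mainTheorem7:
  fixes C :: "('o, 'm) cat" and U :: "'u itself"
  assumes "category C"
    and "infinite (UNIV :: 'u set)"
    and "equations_small C U
         \<or> (complete_wrt_varieties C U \<and> has_equalizers C)
         \<or> (has_coproducts C U \<and> has_cokernel_pairs C)
         \<or> (has_cokernel_pairs C \<and> has_special_colimits C U)"
  shows "complete_wrt_systems C U"
  unfolding complete_wrt_systems_def
proof (intro allI impI, elim conjE)
  fix S A assume S: "S \<noteq> {}" "small U S" "\<forall>f \<in> S. ccod C f = A"
  have universal: "\<exists>E. generates_system C U S E A" if "\<exists>p q. universal_equation C S A p q"
    using that universal_equation_generates_system[OF assms(1)] by blast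
  from assms(3) show "\<exists>E. generates_system C U S E A"
  proof (elim disjE conjE)
    assume "equations_small C U"
    then show ?thesis using equations_small_generates_system[OF assms(1)] S(3) by blast
  next
    assume "complete_wrt_varieties C U" "has_equalizers C"
    then show ?thesis
      using generated_variety_generates_system[OF assms(1)] S
      unfolding complete_wrt_varieties_def by blast
  next
    assume "has_coproducts C U" "has_cokernel_pairs C"
    then show ?thesis using universal universal_equation_coproducts[OF assms(1)] S(2,3) by blast
  next
    assume "has_cokernel_pairs C" "has_special_colimits C U"
    then show ?thesis
      using universal universal_equation_special_colimits[OF assms(1) _ _ assms(2)] S(2,3) by blast
  qed
qed

end
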